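(* Central permutation fails in general: there exist a language $L$, an $L$-algebra $\mathfrak A$ with universe $A$, and elements $a,b,c,d\in A$ such that $a:b\approx_{\mathfrak A}c:d$ holds but $a:c\approx_{\mathfrak A}b:d$ does not hold.
   Context: Let $L$ be a language of algebras: a set of function symbols, each with an arity in $\mathbb N$ (constants are 0-ary function symbols). Fix a countably infinite set $X$ of variables; $T_{L,X}$ is the set of $L$-terms over $X$, and $X(s)$ denotes the set of variables occurring in a term $s$. For an $L$-algebra $\mathfrak A$ with universe $A$, every term $s$ induces a function $s^{\mathfrak A}$, evaluated at assignments of elements of $A$ to variables. An arrow of $\mathfrak A$ is a pair $(a,b)\in A\times A$, written $a\to b$. The generalizations of an arrow $a\to b$ in $\mathfrak A$ are the pairs of arbitrary terms $s\to t$ with $s,t\in T_{L,X}$ such that there is an assignment $\sigma$ of elements of $A$ to the variables in $X(s)\cup X(t)$ with $s^{\mathfrak A}(\sigma)=a$ and $t^{\mathfrak A}(\sigma)=b$; their set is denoted $\uparrow_{\mathfrak A}(a\to b)$. For $L$-algebras $\mathfrak A,\mathfrak B$, an arrow $a\to b$ of $\mathfrak A$ and an arrow $c\to d$ of $\mathfrak B$, set $(a\to b)\uparrow_{(\mathfrak A,\mathfrak B)}(c\to d):=\uparrow_{\mathfrak A}(a\to b)\cap\uparrow_{\mathfrak B}(c\to d)$. A pair of terms $s\to t$ is trivial in $(\mathfrak A,\mathfrak B)$ if it belongs to $\uparrow_{\mathfrak A}(e)$ for every arrow $e$ of $\mathfrak A$ and to $\uparrow_{\mathfrak B}(e')$ for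 every arrow $e'$ of $\mathfrak B$. We write $a\to b\lesssim_{(\mathfrak A,\mathfrak B)}c\to d$ iff either (i) every element of $\uparrow_{\mathfrak A}(a\to b)\cup\uparrow_{\mathfrak B}(c\to d)$ is trivial in $(\mathfrak A,\mathfrak B)$, or (ii) $(a\to b)\uparrow_{(\mathfrak A,\mathfrak B)}(c\to d)$ contains an element not trivial in $(\mathfrak A,\mathfrak B)$ and, for every arrow $c'\to d'$ of $\mathfrak B$, the inclusion $(a\to b)\uparrow_{(\mathfrak A,\mathfrak B)}(c\to d)\subseteq(a\to b)\uparrow_{(\mathfrak A,\mathfrak B)}(c'\to d')$ implies equality of these two sets. Define $a\to b\approx_{(\mathfrak A,\mathfrak B)}c\to d$ iff $a\to b\lesssim_{(\mathfrak A,\mathfrak B)}c\to d$ and $c\to d\lesssim_{(\mathfrak B,\mathfrak A)}a\to b$. For $a,b\in A$ and $c,d\in B$, the similarity-based analogical proportion $a:b\approx_{(\mathfrak A,\mathfrak B)}c:d$ holds iff $a\to b\approx_{(\mathfrak A,\mathfrak B)}c\to d$ and $b\to a\approx_{(\mathfrak A,\mathfrak B)}d\to c$. We write $\approx_{\mathfrak A}$ for $\approx_{(\mathfrak A,\mathfrak A)}$. *)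

theory Defs
  imports Main
begin

datatype 'f trm = Var nat | Fn 'f "'f trm list"

text \<open>Well-formed L-terms: L given by a symbol set Sig with arity function ar.\<close>
fun wf_term :: "'f set \<Rightarrow> ('f \<Rightarrow> nat) \<Rightarrow> 'f trm \<Rightarrow> bool" where
  "wf_term Sig ar (Var x) = True"
| "wf_term Sig ar (Fn f ts) = (f \<in> Sig \<and> length ts = ar f \<and> (\<forall>t\<in>set ts. wf_term Sig ar t))"

fun eval :: "('f \<Rightarrow> 'a list \<Rightarrow> 'a) \<Rightarrow> (nat \<Rightarrow> 'a) \<Rightarrow> 'f trm \<Rightarrow> 'a" where
  "eval I \<sigma> (Var x) = \<sigma> x"
| "eval I \<sigma> (Fn f ts) = I f (map (eval I \<sigma>) ts)"

definition is_algebra :: "'f set \<Rightarrow> ('f \<Rightarrow> nat) \<Rightarrow> 'a set \<Rightarrow> ('f \<Rightarrow> 'a list \<Rightarrow> 'a) \<Rightarrow> bool" where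
  "is_algebra Sig ar A I \<longleftrightarrow> A \<noteq> {} \<and>
     (\<forall>f\<in>Sig. \<forall>xs. length xs = ar f \<and> set xs \<subseteq> A \<longrightarrow> I f xs \<in> A)"

definition gens :: "'f set \<Rightarrow> ('f \<Rightarrow> nat) \<Rightarrow> 'a set \<Rightarrow> ('f \<Rightarrow> 'a list \<Rightarrow> 'a) \<Rightarrow> 'a \<Rightarrow> 'a \<Rightarrow> ('f trm \<times> 'f trm) set" where
  "gens Sig ar A I a b = {(s, t). wf_term Sig ar s \<and> wf_term Sig ar t \<and>
      (\<exists>\<sigma>. (\<forall>x. \<sigma> x \<in> A) \<and> eval I \<sigma> s = a \<and> eval I \<sigma> t = b)}"

definition trivial_in :: "'f set \<Rightarrow> ('f \<Rightarrow> nat) \<Rightarrow> 'a set \<Rightarrow> ('f \<Rightarrow> 'a list \<Rightarrow> 'a) \<Rightarrow>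
    'b set \<Rightarrow> ('f \<Rightarrow> 'b list \<Rightarrow> 'b) \<Rightarrow> 'f trm \<times> 'f trm \<Rightarrow> bool" where
  "trivial_in Sig ar A IA B IB st \<longleftrightarrow>
     (\<forall>a\<in>A. \<forall>b\<in>A. st \<in> gens Sig ar A IA a b) \<and> (\<forall>c\<in>B. \<forall>d\<in>B. st \<in> gens Sig ar B IB c d)"

definition gens2 :: "'f set \<Rightarrow> ('f \<Rightarrow> nat) \<Rightarrow> 'a set \<Rightarrow> ('f \<Rightarrow> 'a list \<Rightarrow> 'a) \<Rightarrow>
    'b set \<Rightarrow> ('f \<Rightarrow> 'b list \<Rightarrow> 'b) \<Rightarrow> 'a \<Rightarrow> 'a \<Rightarrow> 'b \<Rightarrow> 'b \<Rightarrow> ('f trm \<times> 'f trm) set" where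
  "gens2 Sig ar A IA B IB a b c d = gens Sig ar A IA a b \<inter> gens Sig ar B IB c d"

definition arrow_le :: "'f set \<Rightarrow> ('f \<Rightarrow> nat) \<Rightarrow> 'a set \<Rightarrow> ('f \<Rightarrow> 'a list \<Rightarrow> 'a) \<Rightarrow>
    'b set \<Rightarrow> ('f \<Rightarrow> 'b list \<Rightarrow> 'b) \<Rightarrow> 'a \<Rightarrow> 'a \<Rightarrow> 'b \<Rightarrow> 'b \<Rightarrow> bool" where
  "arrow_le Sig ar A IA B IB a b c d \<longleftrightarrow>
     (\<forall>st \<in> gens Sig ar A IA a b \<union> gens Sig ar B IB c d. trivial_in Sig ar A IA B IB st)
   \<or> ((\<exists>st \<in> gens2 Sig ar A IA B IB a b c d. \<not> trivial_in Sig ar A IA B IB st) \<and>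
      (\<forall>c'\<in>B. \<forall>d'\<in>B. gens2 Sig ar A IA B IB a b c d \<subseteq> gens2 Sig ar A IA B IB a b c' d'
          \<longrightarrow> gens2 Sig ar A IA B IB a b c d = gens2 Sig ar A IA B IB a b c' d'))"

definition arrow_approx :: "'f set \<Rightarrow> ('f \<Rightarrow> nat) \<Rightarrow> 'a set \<Rightarrow> ('f \<Rightarrow> 'a list \<Rightarrow> 'a) \<Rightarrow>
    'b set \<Rightarrow> ('f \<Rightarrow> 'b list \<Rightarrow> 'b) \<Rightarrow> 'a \<Rightarrow> 'a \<Rightarrow> 'b \<Rightarrow> 'b \<Rightarrow> bool" where
  "arrow_approx Sig ar A IA B IB a b c d \<longleftrightarrow>
     arrow_le Sig ar A IA B IB a b c d \<and> arrow_le Sig ar B IB A IA c d a b"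

definition analogy :: "'f set \<Rightarrow> ('f \<Rightarrow> nat) \<Rightarrow> 'a set \<Rightarrow> ('f \<Rightarrow> 'a list \<Rightarrow> 'a) \<Rightarrow>
    'b set \<Rightarrow> ('f \<Rightarrow> 'b list \<Rightarrow> 'b) \<Rightarrow> 'a \<Rightarrow> 'a \<Rightarrow> 'b \<Rightarrow> 'b \<Rightarrow> bool" where
  "analogy Sig ar A IA B IB a b c d \<longleftrightarrow>
     arrow_approx Sig ar A IA B IB a b c d \<and> arrow_approx Sig ar A IA B IB b a d c"

end

theory Submission
  imports Defs
begin

text \<open>In the empty language every term is a variable, so the generalizations of an arrow
  \<open>a \<rightarrow> b\<close> are the pairs of distinct variables, together with the pairs \<open>x \<rightarrow> x\<close> when \<open>a = b\<close>.
  Pairs of distinct variables generalize every arrow and are therefore trivial; hence any two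
  arrows between distinct elements are related by the first clause of \<open>\<lesssim>\<close>, which gives
  \<open>0 : 1 \<approx> 0 : 2\<close>. On the other hand \<open>x \<rightarrow> x\<close> generalizes \<open>0 \<rightarrow> 0\<close> but is not trivial, while
  all common generalizations of \<open>0 \<rightarrow> 0\<close> and \<open>1 \<rightarrow> 2\<close> are trivial, so neither clause of
  \<open>0 \<rightarrow> 0 \<lesssim> 1 \<rightarrow> 2\<close> holds and \<open>0 : 0 \<approx> 1 : 2\<close> fails.\<close>

lemma wf_term_empty_iff: "wf_term {} ar t \<longleftrightarrow> (\<exists>x. t = Var x)"
  by (cases t) auto

lemma gens_empty_sig:
  assumes "a \<in> A" "b \<in> A"
  shows "gens {} ar A I a b = {(Var x, Var y) | x y. x \<noteq> y \<or> a = b}"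
proof
  show "gens {} ar A I a b \<subseteq> {(Var x, Var y) | x y. x \<noteq> y \<or> a = b}"
    by (force simp: gens_def wf_term_empty_iff)
next
  show "{(Var x, Var y) | x y. x \<noteq> y \<or> a = b} \<subseteq> gens {} ar A I a b"
  proof clarify
    fix x y :: nat
    assume "x \<noteq> y \<or> a = b"
    then have "eval I (\<lambda>z. if z = x then a else b) (Var x) = a"
      and "eval I (\<lambda>z. if z = x then a else b) (Var y) = b" by auto
    moreover have "\<forall>z. (if z = x then a else b) \<in> A" using assms by simp
    ultimately show "(Var x, Var y) \<in> gens {} ar A I a b"
      unfolding gens_def by auto
  qed
qed

lemma trivial_in_empty_sig_distinct_vars:
  assumes "x \<noteq> y"
  shows "trivial_in {} ar A IA B IB (Var x, Var y)"
  using assms by (auto simp: trivial_in_def gens_empty_sig)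

lemma arrow_le_empty_sig_distinct:
  assumes "a \<in> A" "b \<in> A" "c \<in> B" "d \<in> B" "a \<noteq> b" "c \<noteq> d"
  shows "arrow_le {} ar A IA B IB a b c d"
  using assms
  by (auto simp: arrow_le_def gens_empty_sig trivial_in_empty_sig_distinct_vars)

lemma not_arrow_le_empty_sig_loop:
  assumes "a \<in> A" "c \<in> B" "d \<in> B" "c \<noteq> d"
  shows "\<not> arrow_le {} ar A IA B IB a a c d"
proof -
  have loop_gen: "(Var 0, Var 0) \<in> gens {} ar A IA a a"
    using assms by (simp add: gens_empty_sig)
  have "\<not> trivial_in {} ar A IA B IB (Var 0, Var 0)"
    using assms by (auto simp: trivial_in_def gens_empty_sig)
  with loop_gen have "\<exists>st \<in> gens {} ar A IA a a. \<not> trivial_in {} ar A IA B IB st"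
    by blast
  moreover have "\<forall>st \<in> gens2 {} ar A IA B IB a a c d. trivial_in {} ar A IA B IB st"
    using assms
    by (auto simp: gens2_def gens_empty_sig trivial_in_empty_sig_distinct_vars)
  ultimately show ?thesis
    unfolding arrow_le_def by blast
qed

theorem theorem3:
  shows "\<exists>(Sig :: nat set) (ar :: nat \<Rightarrow> nat) (A :: nat set) (I :: nat \<Rightarrow> nat list \<Rightarrow> nat) a b c d.
           is_algebra Sig ar A I \<and> a \<in> A \<and> b \<in> A \<and> c \<in> A \<and> d \<in> A \<and>
           analogy Sig ar A I A I a b c d \<and> \<not> analogy Sig ar A I A I a c b d"
proof -
  define A :: "nat set" where "A = {0, 1, 2}"
  define ar :: "nat \<Rightarrow> nat" where "ar = (\<lambda>_. 0)"
  define I :: "nat \<Rightarrow> nat list \<Rightarrow> nat" where "I = (\<lambda>_ _. 0)"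
  have "is_algebra {} ar A I"
    by (simp add: is_algebra_def A_def)
  moreover have "analogy {} ar A I A I 0 1 0 2"
    by (simp add: analogy_def arrow_approx_def arrow_le_empty_sig_distinct A_def)
  moreover have "\<not> analogy {} ar A I A I 0 0 1 2"
    by (simp add: analogy_def arrow_approx_def not_arrow_le_empty_sig_loop A_def)
  ultimately show ?thesis
    unfolding A_def by blast
qed

end
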